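(* Let $(A,\cdot,\alpha,R)$ be a Hom-associative Rota-Baxter algebra where $R$ is a Rota-Baxter operator of weight $-1$, i.e. $R(x)\cdot R(y)=R(R(x)\cdot y+x\cdot R(y)-x\cdot y)$, and assume $\alpha\circ R=R\circ\alpha$. Define $x\ast y=R(x)\cdot y-y\cdot R(x)-x\cdot y$. Then $(A,\ast,\alpha)$ is a left Hom-preLie algebra.
   Context: $\mathbb{K}$ is an algebraically closed field of characteristic $0$. A Hom-associative algebra is a triple $(A,\cdot,\alpha)$ with $\alpha(x)\cdot(y\cdot z)=(x\cdot y)\cdot\alpha(z)$ for all $x,y,z$. A Hom-associative Rota-Baxter algebra of weight $\theta\in\mathbb{K}$ is a quadruple $(A,\cdot,\alpha,R)$ with $(A,\cdot,\alpha)$ Hom-associative and $R:A\to A$ linear satisfying $R(x)\cdot R(y)=R(R(x)\cdot y+x\cdot R(y)+\theta\,x\cdot y)$ for all $x,y$. A left Hom-preLie algebra is a triple $(A,\ast,\alpha)$ with $\alpha(x)\ast(y\ast z)-(x\ast y)\ast\alpha(z)=\alpha(y)\ast(x\ast z)-(y\ast x)\ast\alpha(z)$ for all $x,y,z$. *)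

theory Defs
  imports Complex_Main
begin

definition alg_closed_field :: "'k::field itself \<Rightarrow> bool" where
  "alg_closed_field _ \<longleftrightarrow>
     (\<forall>cs::'k list. length cs \<ge> 2 \<and> last cs \<noteq> 0 \<longrightarrow>
        (\<exists>x. (\<Sum>i<length cs. cs ! i * x ^ i) = 0))"

definition bilinear_product ::
  "('k::field \<Rightarrow> 'a::ab_group_add \<Rightarrow> 'a) \<Rightarrow> ('a \<Rightarrow> 'a \<Rightarrow> 'a) \<Rightarrow> bool" where
  "bilinear_product scl m \<longleftrightarrow>
     (\<forall>x y z. m (x + y) z = m x z + m y z) \<and>
     (\<forall>x y z. m x (y + z) = m x y + m x z) \<and>
     (\<forall>c x y. m (scl c x) y = scl c (m x y)) \<and>
     (\<forall>c x y. m x (scl c y) = scl c (m x y))"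

definition linear_map ::
  "('k::field \<Rightarrow> 'a::ab_group_add \<Rightarrow> 'a) \<Rightarrow> ('a \<Rightarrow> 'a) \<Rightarrow> bool" where
  "linear_map scl f \<longleftrightarrow>
     (\<forall>x y. f (x + y) = f x + f y) \<and> (\<forall>c x. f (scl c x) = scl c (f x))"

definition hom_associative ::
  "('k::field \<Rightarrow> 'a::ab_group_add \<Rightarrow> 'a) \<Rightarrow> ('a \<Rightarrow> 'a \<Rightarrow> 'a) \<Rightarrow> ('a \<Rightarrow> 'a) \<Rightarrow> bool" where
  "hom_associative scl m \<alpha> \<longleftrightarrow>
     bilinear_product scl m \<and> linear_map scl \<alpha> \<and>
     (\<forall>x y z. m (\<alpha> x) (m y z) = m (m x y) (\<alpha> z))"

definition hom_assoc_rota_baxter ::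
  "('k::field \<Rightarrow> 'a::ab_group_add \<Rightarrow> 'a) \<Rightarrow> ('a \<Rightarrow> 'a \<Rightarrow> 'a) \<Rightarrow> ('a \<Rightarrow> 'a)
     \<Rightarrow> ('a \<Rightarrow> 'a) \<Rightarrow> 'k \<Rightarrow> bool" where
  "hom_assoc_rota_baxter scl m \<alpha> R \<theta> \<longleftrightarrow>
     hom_associative scl m \<alpha> \<and> linear_map scl R \<and>
     (\<forall>x y. m (R x) (R y) = R (m (R x) y + m x (R y) + scl \<theta> (m x y)))"

definition left_hom_prelie ::
  "('k::field \<Rightarrow> 'a::ab_group_add \<Rightarrow> 'a) \<Rightarrow> ('a \<Rightarrow> 'a \<Rightarrow> 'a) \<Rightarrow> ('a \<Rightarrow> 'a) \<Rightarrow> bool" where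
  "left_hom_prelie scl s \<alpha> \<longleftrightarrow>
     bilinear_product scl s \<and> linear_map scl \<alpha> \<and>
     (\<forall>x y z. s (\<alpha> x) (s y z) - s (s x y) (\<alpha> z)
              = s (\<alpha> y) (s x z) - s (s y x) (\<alpha> z))"

end

theory Submission
  imports Defs
begin

(* Let (A, m, alpha, R) be Hom-associative with R a Rota-Baxter
   operator of weight -1 commuting with alpha, and put
     x * y = R(x) m y - y m R(x) - x m y.
   (1) The antisymmetrisation of * is mapped by R onto the commutator of the
       images:  R(x*y - y*x) = R(x) m R(y) - R(y) m R(x); this is exactly the
       Rota-Baxter identity of weight -1 applied twice.
   (2) Expanding with Hom-associativity and alpha R = R alpha, one checks
         alpha(x) * (y*z) - alpha(y) * (x*z) = (x*y - y*x) * alpha(z),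
       where (1) rewrites the R-term on the right.  Since * is additive in its
       first argument this is the left Hom-preLie identity. *)

locale hom_rota_baxter_weight_minus_one =
  fixes m :: "'a::ab_group_add \<Rightarrow> 'a \<Rightarrow> 'a" and \<alpha> R :: "'a \<Rightarrow> 'a"
  assumes add_left: "m (x + y) z = m x z + m y z"
    and add_right: "m x (y + z) = m x y + m x z"
    and hom_assoc: "m (\<alpha> x) (m y z) = m (m x y) (\<alpha> z)"
    and R_add: "R (x + y) = R x + R y"
    and rota_baxter: "m (R x) (R y) = R (m (R x) y + m x (R y) - m x y)"
    and R_commute: "R (\<alpha> x) = \<alpha> (R x)"
begin

lemma diff_left: "m (x - y) z = m x z - m y z"
  by (metis add_left diff_add_cancel eq_diff_eq)

lemma diff_right: "m z (x - y) = m z x - m z y"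
  by (metis add_right diff_add_cancel eq_diff_eq)

lemma R_diff: "R (x - y) = R x - R y"
  by (metis R_add diff_add_cancel eq_diff_eq)

definition star :: "'a \<Rightarrow> 'a \<Rightarrow> 'a" where
  "star x y = m (R x) y - m y (R x) - m x y"

lemma R_star_commutator:
  "R (star x y - star y x) = m (R x) (R y) - m (R y) (R x)"
proof -
  have "star x y - star y x
      = (m (R x) y + m x (R y) - m x y) - (m (R y) x + m y (R x) - m y x)"
    unfolding star_def by (simp add: algebra_simps)
  then show ?thesis
    by (simp add: R_diff rota_baxter)
qed

lemma star_diff_left: "star (x - y) z = star x z - star y z"
  unfolding star_def by (simp add: R_diff diff_left diff_right algebra_simps)

lemma star_alpha_difference:
  "star (\<alpha> x) (star y z) - star (\<alpha> y) (star x z) = star (star x y - star y x) (\<alpha> z)"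
proof -
  have "star (star x y - star y x) (\<alpha> z)
      = m (m (R x) (R y) - m (R y) (R x)) (\<alpha> z) - m (\<alpha> z) (m (R x) (R y) - m (R y) (R x))
        - m (star x y - star y x) (\<alpha> z)"
    by (subst star_def) (simp only: R_star_commutator)
  moreover have "star (\<alpha> x) (star y z) - star (\<alpha> y) (star x z)
      = m (m (R x) (R y) - m (R y) (R x)) (\<alpha> z) - m (\<alpha> z) (m (R x) (R y) - m (R y) (R x))
        - m (star x y - star y x) (\<alpha> z)"
    unfolding star_def
    by (simp only: diff_left diff_right R_commute hom_assoc) (simp add: algebra_simps)
  ultimately show ?thesis by simp
qed

theorem star_left_hom_prelie:
  "star (\<alpha> x) (star y z) - star (star x y) (\<alpha> z)
     = star (\<alpha> y) (star x z) - star (star y x) (\<alpha> z)"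
  using star_alpha_difference[of x y z] star_diff_left[of "star x y" "star y x" "\<alpha> z"]
  by (simp add: algebra_simps)

end

lemma bilinear_star_product:
  assumes "Modules.module scl" and "bilinear_product scl m" and "linear_map scl R"
  shows "bilinear_product scl (\<lambda>x y. m (R x) y - m y (R x) - m x y)"
proof -
  interpret module scl by fact
  have R: "R (x + y) = R x + R y" "R (scl c x) = scl c (R x)" for c x y
    using assms(3) unfolding linear_map_def by auto
  have M: "m (x + y) z = m x z + m y z" "m x (y + z) = m x y + m x z"
    "m (scl c x) y = scl c (m x y)" "m x (scl c y) = scl c (m x y)" for c x y z
    using assms(2) unfolding bilinear_product_def by auto
  show ?thesis
    unfolding bilinear_product_def
    by (simp add: R M scale_right_diff_distrib scale_right_distrib algebra_simps)
qed

lemma hom_rota_baxter_weight_minus_one_intro: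
  assumes "Modules.module scl" and "hom_assoc_rota_baxter scl m \<alpha> R (-1)"
    and "\<alpha> \<circ> R = R \<circ> \<alpha>"
  shows "hom_rota_baxter_weight_minus_one m \<alpha> R"
proof
  interpret module scl by fact
  have neg: "scl (-1) v = - v" for v
    by (metis scale_minus_left scale_one)
  from assms(2) show "m (R x) (R y) = R (m (R x) y + m x (R y) - m x y)" for x y
    unfolding hom_assoc_rota_baxter_def by (simp add: neg)
  from assms(2) show "m (x + y) z = m x z + m y z" "m x (y + z) = m x y + m x z"
    "m (\<alpha> x) (m y z) = m (m x y) (\<alpha> z)" "R (x + y) = R x + R y" for x y z
    unfolding hom_assoc_rota_baxter_def hom_associative_def bilinear_product_def
      linear_map_def by auto
  from assms(3) show "R (\<alpha> x) = \<alpha> (R x)" for x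
    by (metis comp_apply)
qed

theorem proposition4p2:
  fixes scl :: "'k::field_char_0 \<Rightarrow> 'a::ab_group_add \<Rightarrow> 'a"
    and m :: "'a \<Rightarrow> 'a \<Rightarrow> 'a" and \<alpha> R :: "'a \<Rightarrow> 'a"
  assumes "alg_closed_field TYPE('k)"
    and "Modules.module scl"
    and "hom_assoc_rota_baxter scl m \<alpha> R (-1)"
    and "\<alpha> \<circ> R = R \<circ> \<alpha>"
  shows "left_hom_prelie scl (\<lambda>x y. m (R x) y - m y (R x) - m x y) \<alpha>"
proof -
  interpret hom_rota_baxter_weight_minus_one m \<alpha> R
    using hom_rota_baxter_weight_minus_one_intro[OF assms(2-4)] .
  have "hom_associative scl m \<alpha>" and "linear_map scl R"
    using assms(3) unfolding hom_assoc_rota_baxter_def by auto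
  then have "bilinear_product scl m" and "linear_map scl \<alpha>"
    unfolding hom_associative_def by auto
  have "star = (\<lambda>x y. m (R x) y - m y (R x) - m x y)"
    by (simp add: star_def fun_eq_iff)
  with star_left_hom_prelie bilinear_star_product[OF assms(2) \<open>bilinear_product scl m\<close>
      \<open>linear_map scl R\<close>] \<open>linear_map scl \<alpha>\<close>
  show ?thesis
    unfolding left_hom_prelie_def by simp
qed

end
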